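(* Let $1 \leq p < \infty$, let $T : \ell_p \to \ell_p$ be a bounded linear operator and let $x_0 \in \ell_p$. If there exists $k \in \mathbb{N}$ such that $\underline{\mathrm{d}}(\{n \in \mathbb{N} : \pi_k(T^n x_0) = 0\}) = 1$, then $x_0$ is not a $\mathscr{U}$-frequently hypercyclic vector for $T$.
   Context: $\pi_k((z_n)_{n\ge1}) = z_k$ denotes the $k$-th coordinate. For $A \subset \mathbb{N}_0 = \{0,1,2,\dots\}$, $\underline{\mathrm{d}}(A) = \liminf_{N\to\infty} \frac{|A \cap \{0,\dots,N\}|}{N+1}$ and $\overline{\mathrm{d}}(A) = \limsup_{N\to\infty} \frac{|A \cap \{0,\dots,N\}|}{N+1}$. A vector $x$ is $\mathscr{U}$-frequently hypercyclic for $T$ if for every non-empty open $U \subset \ell_p$ the set $\{n \in \mathbb{N}_0 : T^n x \in U\}$ has positive upper density. *)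

theory Defs
  imports "HOL-Analysis.Analysis" "HOL-Library.Liminf_Limsup"
begin

text \<open>The sequence space l_p over a normed field; sequences are indexed by nat
  (index 0 corresponds to the first coordinate z_1 of the paper).\<close>

definition lp_space :: "real \<Rightarrow> (nat \<Rightarrow> 'a::real_normed_field) set" where
  "lp_space p = {x. summable (\<lambda>n. norm (x n) powr p)}"

definition lp_norm :: "real \<Rightarrow> (nat \<Rightarrow> 'a::real_normed_field) \<Rightarrow> real" where
  "lp_norm p x = (\<Sum>n. norm (x n) powr p) powr (1 / p)"

definition lp_open :: "real \<Rightarrow> (nat \<Rightarrow> 'a::real_normed_field) set \<Rightarrow> bool" where
  "lp_open p U \<longleftrightarrow> U \<subseteq> lp_space p \<and>
     (\<forall>x\<in>U. \<exists>e>0. \<forall>y\<in>lp_space p. lp_norm p (\<lambda>n. y n - x n) < e \<longrightarrow> y \<in> U)"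

definition lp_bounded_linear ::
  "real \<Rightarrow> ((nat \<Rightarrow> 'a::real_normed_field) \<Rightarrow> (nat \<Rightarrow> 'a)) \<Rightarrow> bool" where
  "lp_bounded_linear p T \<longleftrightarrow>
     (\<forall>x\<in>lp_space p. T x \<in> lp_space p) \<and>
     (\<forall>x\<in>lp_space p. \<forall>y\<in>lp_space p. T (\<lambda>n. x n + y n) = (\<lambda>n. T x n + T y n)) \<and>
     (\<forall>c. \<forall>x\<in>lp_space p. T (\<lambda>n. c * x n) = (\<lambda>n. c * T x n)) \<and>
     (\<exists>C. \<forall>x\<in>lp_space p. lp_norm p (T x) \<le> C * lp_norm p x)"

definition lower_density :: "nat set \<Rightarrow> ereal" where
  "lower_density A = liminf (\<lambda>N. ereal (real (card (A \<inter> {0..N})) / real (N + 1)))"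

definition upper_density :: "nat set \<Rightarrow> ereal" where
  "upper_density A = limsup (\<lambda>N. ereal (real (card (A \<inter> {0..N})) / real (N + 1)))"

definition U_frequently_hypercyclic ::
  "real \<Rightarrow> ((nat \<Rightarrow> 'a::real_normed_field) \<Rightarrow> (nat \<Rightarrow> 'a)) \<Rightarrow> (nat \<Rightarrow> 'a) \<Rightarrow> bool" where
  "U_frequently_hypercyclic p T x \<longleftrightarrow> x \<in> lp_space p \<and>
     (\<forall>U. lp_open p U \<and> U \<noteq> {} \<longrightarrow> upper_density {n. (T ^^ n) x \<in> U} > 0)"

end

theory Submission
  imports Defs
begin

text \<open>The coordinate functional y \<mapsto> y k is continuous on l_p, so
  U = {y. y k \<noteq> 0} is a nonempty open set. The orbit of x0 can only visit U at times
  outside the set where the k-th coordinate vanishes, and the complement of a set of lower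
  density 1 has upper density 0.\<close>

lemma lp_space_diff:
  assumes "0 \<le> p" "x \<in> lp_space p" "y \<in> lp_space p"
  shows "(\<lambda>n. y n - x n) \<in> lp_space p"
proof -
  have bound: "norm (y n - x n) powr p \<le> 2 powr p * (norm (y n) powr p + norm (x n) powr p)" for n
  proof -
    let ?m = "max (norm (y n)) (norm (x n))"
    have "norm (y n - x n) \<le> 2 * ?m" using norm_triangle_ineq4[of "y n" "x n"] by linarith
    then have "norm (y n - x n) powr p \<le> (2 * ?m) powr p"
      using assms(1) by (simp add: powr_mono2)
    also have "\<dots> = 2 powr p * ?m powr p"
      by (simp add: powr_mult)
    also have "?m powr p \<le> norm (y n) powr p + norm (x n) powr p"
      by (simp add: max_def)
    finally show ?thesis by simp
  qed
  have "summable (\<lambda>n. 2 powr p * (norm (y n) powr p + norm (x n) powr p))"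
    using assms(2,3) by (intro summable_mult summable_add) (auto simp: lp_space_def)
  then have "summable (\<lambda>n. norm (y n - x n) powr p)"
    by (rule summable_comparison_test[rotated]) (use bound in auto)
  then show ?thesis by (simp add: lp_space_def)
qed

lemma norm_le_lp_norm:
  assumes "0 < p" "z \<in> lp_space p"
  shows "norm (z k) \<le> lp_norm p z"
proof -
  have "norm (z k) powr p \<le> (\<Sum>n. norm (z n) powr p)"
    using sum_le_suminf[of "\<lambda>n. norm (z n) powr p" "{k}"] assms(2) by (simp add: lp_space_def)
  then have "(norm (z k) powr p) powr (1/p) \<le> lp_norm p z"
    unfolding lp_norm_def using assms(1) by (intro powr_mono2) auto
  then show ?thesis using assms(1) by (simp add: powr_powr)
qed

lemma lp_open_coordinate_nonzero:
  assumes "0 < p"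
  shows "lp_open p {y \<in> lp_space p. y k \<noteq> 0}"
  unfolding lp_open_def
proof (intro conjI ballI)
  fix x assume x: "x \<in> {y \<in> lp_space p. y k \<noteq> 0}"
  show "\<exists>e>0. \<forall>y\<in>lp_space p. lp_norm p (\<lambda>n. y n - x n) < e \<longrightarrow> y \<in> {y \<in> lp_space p. y k \<noteq> 0}"
  proof (intro exI[of _ "norm (x k)"] conjI ballI impI)
    fix y assume y: "y \<in> lp_space p" and close: "lp_norm p (\<lambda>n. y n - x n) < norm (x k)"
    have "norm (y k - x k) \<le> lp_norm p (\<lambda>n. y n - x n)"
      using norm_le_lp_norm[OF assms lp_space_diff[of p x y]] assms x y by auto
    with close show "y \<in> {y \<in> lp_space p. y k \<noteq> 0}" using y by auto
  qed (use x in auto)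
qed auto

lemma unit_vector_in_lp_space: "(\<lambda>n. if n = k then 1 else 0) \<in> lp_space p"
  unfolding lp_space_def mem_Collect_eq by (rule summable_finite[of "{k}"]) auto

lemma card_Compl_Int_atLeastAtMost:
  "card (- A \<inter> {0..N}) = Suc N - card (A \<inter> {0..N::nat})"
proof -
  have "- A \<inter> {0..N} = {0..N} - A \<inter> {0..N}" by auto
  then show ?thesis by (simp add: card_Diff_subset)
qed

lemma upper_density_Compl: "upper_density (- A) = 1 - lower_density A"
proof -
  let ?d = "\<lambda>N. ereal (real (card (A \<inter> {0..N})) / real (N + 1))"
  have Compl: "ereal (real (card (- A \<inter> {0..N})) / real (N + 1)) = 1 + - ?d N" for N
  proof -
    have "card (A \<inter> {0..N}) \<le> Suc N" using card_mono[of "{0..N}" "A \<inter> {0..N}"] by auto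
    then show ?thesis by (simp add: card_Compl_Int_atLeastAtMost of_nat_diff diff_divide_distrib)
  qed
  have "upper_density (- A) = limsup (\<lambda>N. 1 + - ?d N)"
    unfolding upper_density_def by (simp only: Compl)
  also have "\<dots> = 1 + - liminf ?d"
    using Limsup_add_ereal_left[of sequentially 1 "\<lambda>N. - ?d N"] ereal_Limsup_uminus[of sequentially ?d]
    by simp
  finally show ?thesis by (simp add: lower_density_def minus_ereal_def)
qed

lemma upper_density_mono: "A \<subseteq> B \<Longrightarrow> upper_density A \<le> upper_density B"
  unfolding upper_density_def
  by (intro Limsup_mono always_eventually allI ereal_less_eq(3)[THEN iffD2] divide_right_mono
      of_nat_mono card_mono) auto

theorem lemma2p1:
  fixes p :: real and T :: "(nat \<Rightarrow> 'a::real_normed_field) \<Rightarrow> (nat \<Rightarrow> 'a)"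
    and x0 :: "nat \<Rightarrow> 'a"
  assumes "1 \<le> p"
    and "lp_bounded_linear p T"
    and "x0 \<in> lp_space p"
    and "\<exists>k. lower_density {n. (T ^^ n) x0 k = 0} = 1"
  shows "\<not> U_frequently_hypercyclic p T x0"
proof
  assume hypercyclic: "U_frequently_hypercyclic p T x0"
  obtain k where k: "lower_density {n. (T ^^ n) x0 k = 0} = 1" using assms(4) by blast
  define U :: "(nat \<Rightarrow> 'a) set" where "U = {y \<in> lp_space p. y k \<noteq> 0}"
  have "lp_open p U" "U \<noteq> {}"
    using assms(1) lp_open_coordinate_nonzero[of p k] unit_vector_in_lp_space[of k p]
    unfolding U_def by force+
  then have "0 < upper_density {n. (T ^^ n) x0 \<in> U}"
    using hypercyclic by (simp add: U_frequently_hypercyclic_def)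
  also have "\<dots> \<le> upper_density (- {n. (T ^^ n) x0 k = 0})"
    by (rule upper_density_mono) (auto simp: U_def)
  also have "\<dots> = 0"
    using k by (simp add: upper_density_Compl)
  finally show False by simp
qed

end
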